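(* Let $\mathbb{F}$ be a field and $f\in\mathbb{F}(X)$ of degree $d\ge1$. Write $f^{(k)}=g_k/h_k$ in lowest terms, and let $e,\epsilon,\mu,\nu$ be the smallest positive integers $k$ such that, respectively, $g_k(0)=0$, $h_k(0)=0$, $\deg g_k<\deg h_k$, $\deg g_k>\deg h_k$ (each $\infty$ if no such $k$ exists). If $\min\{\mu,\nu\}<\infty$ set $\delta=|\deg g_{\min\{\mu,\nu\}}-\deg h_{\min\{\mu,\nu\}}|$. Let $S_k$ and $T_k$ denote the multiplicity of $0$ as a root of $g_k$ and of $h_k$ respectively (the degree of the lowest-order term). Then: (i) If $\nu<\mu$, then for every integer $i\ge1$, $\deg g_{i\nu}=d^{i\nu}$ and $\deg h_{i\nu}=d^{i\nu}-\delta^i$; and $\deg g_k=\deg h_k=d^k$ whenever $k\not\equiv0\pmod\nu$. (ii) If $\mu<\nu$ and $\epsilon=e=\infty$, then $\deg g_k=\deg h_k=d^k$ for all $k\ge1$ with $k\ne\mu$. (iii) If $\mu<\nu$ and $e<\epsilon$, write $S=S_e$. Then for $k=ie+\mu$ with $i\ge0$ an integer, $\deg g_k=d^k-\delta S^i$ and $\deg h_k=d^k$; for all other $k\ge1$, $\deg g_k=\deg h_k=d^k$. (iv) If $\mu<\nu$ and $\epsilon<\infty$ (so that $e=\epsilon+\mu$), write $T=T_\epsilon$. Then for every $k\ge1$, $\deg g_{\mu+k}=d^{\mu+k}-\delta S_k$ and $\deg h_{\mu+k}=d^{\mu+k}-\delta T_k$. Moreover, for $k=ie$ with $i\ge1$,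 $S_k=\delta^iT^i$ and $T_k=0$; for $k=ie+\epsilon$ with $i\ge0$, $T_k=\delta^iT^{i+1}$ and $S_k=0$; and for all other $k\ge1$, $S_k=T_k=0$.
   Context: Rational functions are in lowest terms with $\deg(g/h)=\max\{\deg g,\deg h\}$; iterates $f^{(k)}$ are $k$-fold compositions of $f$. *)

theory Defs
  imports "HOL-Computational_Algebra.Computational_Algebra"
          "HOL-Computational_Algebra.Normalized_Fraction"
          "HOL-Library.Extended_Nat"
begin

text \<open>Rational functions over a field are elements of the fraction field of 'a poly.
  A rational function is written in lowest terms g/h via quot_of_fract
  (g, h coprime, h normalized).\<close>

type_synonym 'a ratfun = "'a poly fract"

definition rnum :: "'a::field_gcd ratfun \<Rightarrow> 'a poly" where
  "rnum f = fst (quot_of_fract f)"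

definition rden :: "'a::field_gcd ratfun \<Rightarrow> 'a poly" where
  "rden f = snd (quot_of_fract f)"

definition rdeg :: "'a::field_gcd ratfun \<Rightarrow> nat" where
  "rdeg f = max (degree (rnum f)) (degree (rden f))"

definition rcomp :: "'a::field_gcd ratfun \<Rightarrow> 'a ratfun \<Rightarrow> 'a ratfun" where
  "rcomp f F = poly (map_poly (\<lambda>c. to_fract [:c:]) (rnum f)) F / poly (map_poly (\<lambda>c. to_fract [:c:]) (rden f)) F"

definition riter :: "'a::field_gcd ratfun \<Rightarrow> nat \<Rightarrow> 'a ratfun" where
  "riter f k = (rcomp f ^^ k) (to_fract [:0, 1:])"

definition gk :: "'a::field_gcd ratfun \<Rightarrow> nat \<Rightarrow> 'a poly" where
  "gk f k = rnum (riter f k)"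

definition hk :: "'a::field_gcd ratfun \<Rightarrow> nat \<Rightarrow> 'a poly" where
  "hk f k = rden (riter f k)"

definition least_pos :: "(nat \<Rightarrow> bool) \<Rightarrow> enat" where
  "least_pos P = (if \<exists>k>0. P k then enat (LEAST k. 0 < k \<and> P k) else \<infinity>)"

definition e_idx :: "'a::field_gcd ratfun \<Rightarrow> enat" where
  "e_idx f = least_pos (\<lambda>k. poly (gk f k) 0 = 0)"

definition eps_idx :: "'a::field_gcd ratfun \<Rightarrow> enat" where
  "eps_idx f = least_pos (\<lambda>k. poly (hk f k) 0 = 0)"

definition mu_idx :: "'a::field_gcd ratfun \<Rightarrow> enat" where
  "mu_idx f = least_pos (\<lambda>k. degree (gk f k) < degree (hk f k))"

definition nu_idx :: "'a::field_gcd ratfun \<Rightarrow> enat" where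
  "nu_idx f = least_pos (\<lambda>k. degree (gk f k) > degree (hk f k))"

text \<open>delta = |deg g_m - deg h_m| with m = min(mu, nu) (meaningful when m is finite).\<close>
definition delta :: "'a::field_gcd ratfun \<Rightarrow> nat" where
  "delta f = (let m = the_enat (min (mu_idx f) (nu_idx f))
              in nat \<bar>int (degree (gk f m)) - int (degree (hk f m))\<bar>)"

definition Sk :: "'a::field_gcd ratfun \<Rightarrow> nat \<Rightarrow> nat" where
  "Sk f k = order 0 (gk f k)"

definition Tk :: "'a::field_gcd ratfun \<Rightarrow> nat \<Rightarrow> nat" where
  "Tk f k = order 0 (hk f k)"

end

theory Submission
  imports Defs
begin

text \<open>
  Write \<open>F = G/H\<close> and \<open>x = g/h\<close> in lowest terms and let \<open>n = deg x\<close>. Then \<open>x(F)\<close> is the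
  quotient of the homogenizations \<open>H^n g(G/H)\<close> and \<open>H^n h(G/H)\<close>, which are again coprime, hence
  numerator and denominator of \<open>x(F)\<close> up to a unit. If \<open>deg G \<noteq> deg H\<close>, a single monomial
  \<open>G^i H^(n-i)\<close> dominates the degree of a homogenization; if \<open>G\<close> or \<open>H\<close> vanishes at 0, a single
  monomial dominates its order at 0. Applied to \<open>f^(j+k) = f^(j)(f^(k))\<close>, this yields multiplicative
  laws for the degree defects \<open>d^k - deg g_k\<close>, \<open>d^k - deg h_k\<close> and for the orders \<open>S_k\<close>, \<open>T_k\<close>.
  The four cases follow from these laws alone, by induction along the relevant period.
\<close>

definition const_fract :: "'a::field_gcd \<Rightarrow> 'a ratfun" where
  "const_fract c = to_fract [:c:]"

definition poly_ratfun :: "'a::field_gcd poly \<Rightarrow> 'a ratfun \<Rightarrow> 'a ratfun" where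
  "poly_ratfun p F = poly (map_poly const_fract p) F"

lemma const_fract_0 [simp]: "const_fract 0 = 0"
  by (simp add: const_fract_def)

lemma const_fract_1 [simp]: "const_fract 1 = 1"
  by (simp add: const_fract_def one_pCons[symmetric])

lemma const_fract_add [simp]: "const_fract (a + b) = const_fract a + const_fract b"
  unfolding const_fract_def to_fract_add[symmetric] by simp

lemma const_fract_mult [simp]: "const_fract (a * b) = const_fract a * const_fract b"
  by (simp add: const_fract_def flip: to_fract_mult)

lemma const_fract_eq_0_iff [simp]: "const_fract a = 0 \<longleftrightarrow> a = 0"
  by (simp add: const_fract_def)

lemma const_fract_sum: "const_fract (sum f A) = (\<Sum>x\<in>A. const_fract (f x))"
  by (induct A rule: infinite_finite_induct) auto

lemma to_fract_smult: "to_fract (smult c q) = const_fract c * to_fract q"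
  by (simp add: const_fract_def flip: to_fract_mult)

lemma to_fract_power [simp]: "to_fract (x ^ n) = to_fract x ^ n"
  by (induct n) auto

lemma poly_ratfun_mult: "poly_ratfun (p * q) F = poly_ratfun p F * poly_ratfun q F"
proof -
  have "map_poly const_fract (p * q) = map_poly const_fract p * map_poly const_fract q"
    by (rule poly_eqI) (simp add: coeff_map_poly coeff_mult const_fract_sum)
  then show ?thesis by (simp add: poly_ratfun_def)
qed

lemma poly_ratfun_add: "poly_ratfun (p + q) F = poly_ratfun p F + poly_ratfun q F"
proof -
  have "map_poly const_fract (p + q) = map_poly const_fract p + map_poly const_fract q"
    by (rule poly_eqI) (simp add: coeff_map_poly)
  then show ?thesis by (simp add: poly_ratfun_def)
qed

lemma poly_ratfun_pCons: "poly_ratfun (pCons a p) F = const_fract a + F * poly_ratfun p F"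
  by (simp add: poly_ratfun_def map_poly_pCons)

lemma poly_ratfun_0 [simp]: "poly_ratfun 0 F = 0"
  by (simp add: poly_ratfun_def)

lemma poly_ratfun_const [simp]: "poly_ratfun [:a:] F = const_fract a"
  by (simp add: poly_ratfun_pCons)

lemma poly_ratfun_1 [simp]: "poly_ratfun 1 F = 1"
  by (simp add: poly_ratfun_def)

lemma poly_ratfun_X [simp]: "poly_ratfun [:0, 1:] F = F"
  by (simp add: poly_ratfun_pCons)

lemma poly_ratfun_altdef:
  "degree p \<le> N \<Longrightarrow> poly_ratfun p F = (\<Sum>i\<le>N. const_fract (coeff p i) * F ^ i)"
  unfolding poly_ratfun_def
  by (simp add: poly_altdef degree_map_poly coeff_map_poly, intro sum.mono_neutral_left)
    (auto simp: coeff_eq_0)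

lemma rcomp_conv_poly_ratfun: "rcomp x F = poly_ratfun (rnum x) F / poly_ratfun (rden x) F"
  unfolding rcomp_def poly_ratfun_def const_fract_def[abs_def] ..

lemma rnum_rden_eq: "x = to_fract (rnum x) / to_fract (rden x)"
  by (metis Fract_conv_to_fract Fract_quot_of_fract rden_def rnum_def)

lemma rden_nonzero [simp]: "rden x \<noteq> 0"
  by (simp add: rden_def)

lemma coprime_rnum_rden: "coprime (rnum x) (rden x)"
  by (simp add: rnum_def rden_def coprime_quot_of_fract)

lemma degree_rnum_le: "degree (rnum x) \<le> rdeg x"
  by (simp add: rdeg_def)

lemma degree_rden_le: "degree (rden x) \<le> rdeg x"
  by (simp add: rdeg_def)

lemma rnum_nonzero: "rdeg F \<ge> 1 \<Longrightarrow> rnum F \<noteq> 0"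
proof
  assume "rdeg F \<ge> 1" "rnum F = 0"
  then have "rden F = 1"
    unfolding rnum_def rden_def using fst_quot_of_fract_0_imp by blast
  with \<open>rdeg F \<ge> 1\<close> \<open>rnum F = 0\<close> show False by (simp add: rdeg_def)
qed

lemma rdeg_ge_1_iff: "rdeg F \<ge> 1 \<longleftrightarrow> degree (rnum F) \<ge> 1 \<or> degree (rden F) \<ge> 1"
  by (auto simp: rdeg_def max_def)

lemma rnum_rden_fraction:
  assumes "coprime A B" "B \<noteq> 0"
  obtains c where "is_unit c" "A = rnum (to_fract A / to_fract B) * c"
    "B = rden (to_fract A / to_fract B) * c"
proof -
  have q: "quot_of_fract (to_fract A / to_fract B) = normalize_quot (A, B)"
    by (simp add: Fract_conv_to_fract[symmetric]
        quot_of_fract_quot_to_fract[of "(A, B)", unfolded quot_to_fract_def, simplified])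
  obtain c where c: "A = fst (normalize_quot (A, B)) * c" "B = snd (normalize_quot (A, B)) * c"
      "c dvd A" "c dvd B"
    using normalize_quotE[OF assms(2), of A] by blast
  have "is_unit c" by (rule coprime_common_divisor[OF assms(1) c(3) c(4)])
  with c(1,2) q show ?thesis using that unfolding rnum_def rden_def by auto
qed

lemma coprime_imp_poly_nonzero_at:
  fixes g h :: "'a::field_gcd poly"
  assumes "coprime g h"
  shows "poly g a \<noteq> 0 \<or> poly h a \<noteq> 0"
proof (rule ccontr)
  assume "\<not> ?thesis"
  then have "[:-a, 1:] dvd g" "[:-a, 1:] dvd h" by (simp_all add: poly_eq_0_iff_dvd)
  then have "is_unit [:-a, 1:]" using coprime_common_divisor[OF assms] by blast
  then show False by (simp add: is_unit_iff_degree)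
qed

lemma unit_factor_invariants:
  fixes a c :: "'a::field poly"
  assumes "is_unit c" "A = a * c"
  shows "degree A = degree a" "order 0 A = order 0 a"
proof -
  have "c \<noteq> 0" using assms(1) by auto
  then have c: "c \<noteq> 0" "degree c = 0" using assms(1) is_unit_iff_degree by auto
  then have "poly c 0 \<noteq> 0" by (metis leading_coeff_0_iff poly_0_coeff_0)
  with assms c show "degree A = degree a" "order 0 A = order 0 a"
    by (cases "a = 0"; auto simp: degree_mult_eq order_mult order_0I)+
qed

definition homog :: "nat \<Rightarrow> 'a::field_gcd poly \<Rightarrow> 'a poly \<Rightarrow> 'a poly \<Rightarrow> 'a poly" where
  "homog n p G H = (\<Sum>i\<le>n. smult (coeff p i) (G ^ i * H ^ (n - i)))"

lemma poly_ratfun_fraction: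
  assumes "degree p \<le> n" "H \<noteq> 0"
  shows "poly_ratfun p (to_fract G / to_fract H) = to_fract (homog n p G H) / to_fract H ^ n"
proof -
  have H: "to_fract H \<noteq> 0" using assms by simp
  have "poly_ratfun p (to_fract G / to_fract H) =
      (\<Sum>i\<le>n. const_fract (coeff p i) * (to_fract G / to_fract H) ^ i)"
    using assms by (simp add: poly_ratfun_altdef)
  also have "\<dots> = (\<Sum>i\<le>n. const_fract (coeff p i) * to_fract G ^ i * to_fract H ^ (n - i) / to_fract H ^ n)"
  proof (rule sum.cong[OF refl])
    fix i assume "i \<in> {..n}"
    then have "to_fract H ^ n = to_fract H ^ i * to_fract H ^ (n - i)"
      by (simp flip: power_add)
    with H show "const_fract (coeff p i) * (to_fract G / to_fract H) ^ i =
        const_fract (coeff p i) * to_fract G ^ i * to_fract H ^ (n - i) / to_fract H ^ n"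
      by (simp add: power_divide)
  qed
  also have "\<dots> = to_fract (homog n p G H) / to_fract H ^ n"
    by (simp add: homog_def to_fract_smult sum_divide_distrib mult.assoc)
  finally show ?thesis .
qed

lemma homog_raise:
  assumes "degree p \<le> k" "k \<le> n"
  shows "homog n p G H = H ^ (n - k) * homog k p G H"
proof -
  have "homog n p G H = (\<Sum>i\<le>k. smult (coeff p i) (G ^ i * H ^ (n - i)))"
    unfolding homog_def using assms
    by (intro sum.mono_neutral_right) (auto simp: coeff_eq_0)
  also have "\<dots> = (\<Sum>i\<le>k. H ^ (n - k) * smult (coeff p i) (G ^ i * H ^ (k - i)))"
  proof (rule sum.cong[OF refl])
    fix i assume "i \<in> {..k}"
    with assms have "H ^ (n - i) = H ^ (n - k) * H ^ (k - i)" by (simp flip: power_add)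
    then show "smult (coeff p i) (G ^ i * H ^ (n - i)) = H ^ (n - k) * smult (coeff p i) (G ^ i * H ^ (k - i))"
      by (simp add: algebra_simps)
  qed
  also have "\<dots> = H ^ (n - k) * homog k p G H" by (simp add: homog_def sum_distrib_left)
  finally show ?thesis .
qed

lemma homog_split_term:
  assumes "t \<le> n"
  shows "homog n p G H = smult (coeff p t) (G ^ t * H ^ (n - t)) +
    (\<Sum>i\<in>{..n} - {t}. smult (coeff p i) (G ^ i * H ^ (n - i)))"
  unfolding homog_def using assms by (subst sum.remove[of _ t]) auto

lemma homog_congruent_top_term: "H dvd homog n p G H - smult (coeff p n) (G ^ n)"
proof -
  have "homog n p G H - smult (coeff p n) (G ^ n) =
      (\<Sum>i\<in>{..n} - {n}. smult (coeff p i) (G ^ i * H ^ (n - i)))"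
    using homog_split_term[of n n p G H] by simp
  also have "H dvd \<dots>"
  proof (rule dvd_sum)
    fix i assume "i \<in> {..n} - {n}"
    then have "n - i = Suc (n - i - 1)" by auto
    then show "H dvd smult (coeff p i) (G ^ i * H ^ (n - i))"
      by (metis dvd_mult dvd_smult dvd_triv_left power_Suc)
  qed
  finally show ?thesis .
qed

lemma degree_monomial_product:
  fixes G H :: "'a::field poly"
  shows "G \<noteq> 0 \<Longrightarrow> H \<noteq> 0 \<Longrightarrow> degree (G ^ i * H ^ (n - i)) = i * degree G + (n - i) * degree H"
  by (simp add: degree_mult_eq degree_power_eq)

lemma degree_sum_less:
  assumes "finite S" "\<And>i. i \<in> S \<Longrightarrow> f i = 0 \<or> degree (f i) < D"
  shows "sum f S = 0 \<or> degree (sum f S) < D"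
proof (cases "D = 0")
  case True
  with assms(2) show ?thesis by simp
next
  case False
  have "degree (sum f S) \<le> D - 1"
    using assms(2) False by (intro degree_sum_le[OF assms(1)]) fastforce
  with False show ?thesis by linarith
qed

lemma degree_add_dominant:
  fixes a b :: "'a::field poly"
  assumes "a \<noteq> 0" "b = 0 \<or> degree b < degree a"
  shows "a + b \<noteq> 0 \<and> degree (a + b) = degree a"
proof -
  have "degree (a + b) = degree a" using assms by (auto intro: degree_add_eq_left)
  moreover have "a + b \<noteq> 0"
  proof
    assume "a + b = 0"
    then have "b = - a" by (simp add: eq_neg_iff_add_eq_0 add.commute)
    with assms show False by auto
  qed
  ultimately show ?thesis by simp
qed

lemma coeff_below_order: "i < order 0 p \<Longrightarrow> coeff p i = 0"
proof -
  assume i: "i < order 0 p"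
  obtain q where q: "p = [:0, 1:] ^ order 0 p * q"
    using order_1[of 0 p] by (auto elim: dvdE)
  have "coeff p i = coeff (monom 1 (order 0 p) * q) i" by (subst q) (simp add: monom_altdef)
  with i show ?thesis by (simp add: coeff_monom_mult)
qed

lemma coeff_order_nonzero: "p \<noteq> 0 \<Longrightarrow> coeff p (order 0 p) \<noteq> 0"
proof -
  assume p: "p \<noteq> 0"
  obtain q where q: "p = [:-0, 1:] ^ order 0 p * q" "\<not> [:-0, 1:] dvd q"
    using order_decomp[OF p, of 0] by blast
  have "coeff q 0 \<noteq> 0" using q(2) by (simp add: dvd_iff_poly_eq_0 poly_0_coeff_0)
  moreover have "coeff p (order 0 p) = coeff q 0"
    by (subst q(1)) (simp add: monom_altdef[of 1, simplified, symmetric] coeff_monom_mult)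
  ultimately show ?thesis by simp
qed

text \<open>If \<open>deg G < deg H\<close>, the monomial of lowest index present in \<open>p\<close>, namely \<open>i = ord_0 p\<close>, dominates.\<close>

lemma degree_homog_less:
  assumes "p \<noteq> 0" "degree p \<le> n" "G \<noteq> 0" "H \<noteq> 0" "degree G < degree H"
  shows "homog n p G H \<noteq> 0 \<and>
    degree (homog n p G H) = order 0 p * degree G + (n - order 0 p) * degree H"
proof -
  define t where "t = order 0 p"
  have tn: "t \<le> n" using order_degree[OF assms(1), of 0] assms(2) t_def by simp
  have ct: "coeff p t \<noteq> 0" using coeff_order_nonzero[OF assms(1)] t_def by simp
  let ?a = "smult (coeff p t) (G ^ t * H ^ (n - t))"
  let ?b = "\<Sum>i\<in>{..n} - {t}. smult (coeff p i) (G ^ i * H ^ (n - i))"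
  have a: "?a \<noteq> 0" "degree ?a = t * degree G + (n - t) * degree H"
    using ct assms degree_monomial_product by auto
  have "?b = 0 \<or> degree ?b < degree ?a"
  proof (rule degree_sum_less)
    fix i assume i: "i \<in> {..n} - {t}"
    show "smult (coeff p i) (G ^ i * H ^ (n - i)) = 0 \<or>
        degree (smult (coeff p i) (G ^ i * H ^ (n - i))) < degree ?a"
    proof (cases "coeff p i = 0")
      case False
      with i have "t < i" using coeff_below_order[of i p] t_def by fastforce
      moreover obtain r where "n = i + r" using i le_iff_add by auto
      ultimately obtain j where "i = t + j" "n = t + j + r" "0 < j" using less_imp_add_positive by blast
      with assms(5) have "i * degree G + (n - i) * degree H < t * degree G + (n - t) * degree H"
        by (auto simp: algebra_simps)
      with False assms a(2) show ?thesis by (simp add: degree_monomial_product)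
    qed simp
  qed simp
  with degree_add_dominant[OF a(1)] homog_split_term[OF tn, of p G H] a(2) t_def show ?thesis
    by simp
qed

text \<open>If \<open>deg H < deg G\<close>, the monomial of highest index present in \<open>p\<close>, namely \<open>i = deg p\<close>, dominates.\<close>

lemma degree_homog_greater:
  assumes "p \<noteq> 0" "degree p \<le> n" "G \<noteq> 0" "H \<noteq> 0" "degree H < degree G"
  shows "homog n p G H \<noteq> 0 \<and>
    degree (homog n p G H) = degree p * degree G + (n - degree p) * degree H"
proof -
  define t where "t = degree p"
  have tn: "t \<le> n" using assms(2) t_def by simp
  have ct: "coeff p t \<noteq> 0" using assms(1) t_def by simp
  let ?a = "smult (coeff p t) (G ^ t * H ^ (n - t))"
  let ?b = "\<Sum>i\<in>{..n} - {t}. smult (coeff p i) (G ^ i * H ^ (n - i))"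
  have a: "?a \<noteq> 0" "degree ?a = t * degree G + (n - t) * degree H"
    using ct assms degree_monomial_product by auto
  have "?b = 0 \<or> degree ?b < degree ?a"
  proof (rule degree_sum_less)
    fix i assume i: "i \<in> {..n} - {t}"
    show "smult (coeff p i) (G ^ i * H ^ (n - i)) = 0 \<or>
        degree (smult (coeff p i) (G ^ i * H ^ (n - i))) < degree ?a"
    proof (cases "coeff p i = 0")
      case False
      with i have "i < t" using le_degree t_def by fastforce
      moreover obtain r where "n = t + r" using tn le_iff_add by auto
      ultimately obtain j where "t = i + j" "n = i + j + r" "0 < j" using less_imp_add_positive by blast
      with assms(5) have "i * degree G + (n - i) * degree H < t * degree G + (n - t) * degree H"
        by (auto simp: algebra_simps)
      with False assms a(2) show ?thesis by (simp add: degree_monomial_product)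
    qed simp
  qed simp
  with degree_add_dominant[OF a(1)] homog_split_term[OF tn, of p G H] a(2) t_def show ?thesis
    by simp
qed

lemma order_add_dominant:
  fixes a b :: "'a::field poly"
  assumes "a \<noteq> 0" "[:0, 1:] ^ Suc (order 0 a) dvd b"
  shows "order 0 (a + b) = order 0 a"
proof -
  have "[:0, 1:] ^ order 0 a dvd [:0, 1:] ^ Suc (order 0 a)" by (rule le_imp_power_dvd) simp
  moreover have "[:0, 1:] ^ order 0 a dvd a" using order_1[of 0 a] by simp
  ultimately have "[:0, 1:] ^ order 0 a dvd a + b" using assms(2) by (meson dvd_add dvd_trans)
  moreover have "\<not> [:0, 1:] ^ Suc (order 0 a) dvd a + b"
  proof
    assume "[:0, 1:] ^ Suc (order 0 a) dvd a + b"
    then have "[:0, 1:] ^ Suc (order 0 a) dvd (a + b) - b" using assms(2) by (rule dvd_diff)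
    then have "[:- 0, 1:] ^ Suc (order 0 a) dvd a" by simp
    then have "a = 0 \<or> Suc (order 0 a) \<le> order 0 a" by (simp only: order_divides)
    with assms(1) show False by simp
  qed
  ultimately show ?thesis using order_unique_lemma[of 0 "order 0 a" "a + b"] by simp
qed

lemma order_power: "(p::'a::idom poly) \<noteq> 0 \<Longrightarrow> order a (p ^ k) = k * order a p"
  by (induct k) (auto simp: order_mult)

lemma X_power_dvd_power:
  assumes "[:0, 1:] ^ s dvd G" "k \<le> s * i"
  shows "[:0, 1:] ^ k dvd (G::'a::field poly) ^ i"
proof -
  have "[:0, 1:] ^ (s * i) dvd G ^ i" using assms(1) by (simp add: power_mult dvd_power_same)
  moreover have "[:0, 1:] ^ k dvd [:0, 1:] ^ (s * i)" using assms(2) by (simp add: le_imp_power_dvd)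
  ultimately show ?thesis by (meson dvd_trans)
qed

text \<open>If \<open>G(0) = 0 \<noteq> H(0)\<close>, the monomial of lowest index present in \<open>p\<close> has the least order at 0.\<close>

lemma order_homog_root_num:
  assumes "p \<noteq> 0" "degree p \<le> n" "G \<noteq> 0" "H \<noteq> 0" "poly G 0 = 0" "poly H 0 \<noteq> 0"
  shows "order 0 (homog n p G H) = order 0 p * order 0 G"
proof -
  define t where "t = order 0 p"
  define s where "s = order 0 G"
  have s: "s \<ge> 1" using assms order_gt_0_iff[of G 0] s_def by simp
  have tn: "t \<le> n" using order_degree[OF assms(1), of 0] assms(2) t_def by simp
  have ct: "coeff p t \<noteq> 0" using coeff_order_nonzero[OF assms(1)] t_def by simp
  let ?a = "smult (coeff p t) (G ^ t * H ^ (n - t))"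
  let ?b = "\<Sum>i\<in>{..n} - {t}. smult (coeff p i) (G ^ i * H ^ (n - i))"
  have a: "?a \<noteq> 0" "order 0 ?a = t * s"
    using ct assms order_0I[OF assms(6)] s_def by (auto simp: order_smult order_mult order_power)
  have "[:0, 1:] ^ Suc (order 0 ?a) dvd ?b"
  proof (rule dvd_sum)
    fix i assume i: "i \<in> {..n} - {t}"
    show "[:0, 1:] ^ Suc (order 0 ?a) dvd smult (coeff p i) (G ^ i * H ^ (n - i))"
    proof (cases "coeff p i = 0")
      case False
      with i have "t < i" using coeff_below_order[of i p] t_def by fastforce
      then have "s * (t + 1) \<le> s * i" by (intro mult_le_mono2) simp
      with s have "Suc (t * s) \<le> s * i" by (simp add: algebra_simps)
      moreover have "[:0, 1:] ^ s dvd G" using order_1[of 0 G] s_def by simp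
      ultimately have "[:0, 1:] ^ Suc (t * s) dvd G ^ i" by (intro X_power_dvd_power) (simp_all add: mult.commute)
      with a(2) show ?thesis by (simp add: dvd_smult)
    qed simp
  qed
  with order_add_dominant[OF a(1)] homog_split_term[OF tn, of p G H] a(2) t_def s_def show ?thesis
    by simp
qed

text \<open>If \<open>H(0) = 0 \<noteq> G(0)\<close>, the monomial of highest index present in \<open>p\<close> has the least order at 0.\<close>

lemma order_homog_root_den:
  assumes "p \<noteq> 0" "degree p \<le> n" "G \<noteq> 0" "H \<noteq> 0" "poly H 0 = 0" "poly G 0 \<noteq> 0"
  shows "order 0 (homog n p G H) = (n - degree p) * order 0 H"
proof -
  define t where "t = degree p"
  define s where "s = order 0 H"
  have s: "s \<ge> 1" using assms order_gt_0_iff[of H 0] s_def by simp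
  have tn: "t \<le> n" using assms(2) t_def by simp
  have ct: "coeff p t \<noteq> 0" using assms(1) t_def by simp
  let ?a = "smult (coeff p t) (G ^ t * H ^ (n - t))"
  let ?b = "\<Sum>i\<in>{..n} - {t}. smult (coeff p i) (G ^ i * H ^ (n - i))"
  have a: "?a \<noteq> 0" "order 0 ?a = (n - t) * s"
    using ct assms order_0I[OF assms(6)] s_def by (auto simp: order_smult order_mult order_power)
  have "[:0, 1:] ^ Suc (order 0 ?a) dvd ?b"
  proof (rule dvd_sum)
    fix i assume i: "i \<in> {..n} - {t}"
    show "[:0, 1:] ^ Suc (order 0 ?a) dvd smult (coeff p i) (G ^ i * H ^ (n - i))"
    proof (cases "coeff p i = 0")
      case False
      with i have "i < t" using le_degree t_def by fastforce
      with tn have "s * (n - t + 1) \<le> s * (n - i)" by (intro mult_le_mono2) simp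
      with s have "Suc ((n - t) * s) \<le> s * (n - i)" by (simp add: algebra_simps)
      moreover have "[:0, 1:] ^ s dvd H" using order_1[of 0 H] s_def by simp
      ultimately have "[:0, 1:] ^ Suc ((n - t) * s) dvd H ^ (n - i)"
        by (intro X_power_dvd_power) (simp_all add: mult.commute)
      with a(2) show ?thesis by (simp add: dvd_smult)
    qed simp
  qed
  with order_add_dominant[OF a(1)] homog_split_term[OF tn, of p G H] a(2) t_def s_def show ?thesis
    by simp
qed

lemma homog_nonzero:
  assumes "coprime G H" "H \<noteq> 0" "p \<noteq> 0" "degree p \<le> n" "degree G \<ge> 1 \<or> degree H \<ge> 1"
  shows "homog n p G H \<noteq> 0"
proof -
  define k where "k = degree p"
  have "homog n p G H = H ^ (n - k) * homog k p G H"
    using assms k_def by (intro homog_raise) auto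
  moreover have "homog k p G H \<noteq> 0"
  proof (cases "degree H = 0")
    case True
    with assms(5) have "degree H < degree G" "G \<noteq> 0" by auto
    then show ?thesis using degree_homog_greater[OF assms(3) _ _ assms(2), of k] k_def by simp
  next
    case False
    show ?thesis
    proof
      assume "homog k p G H = 0"
      then have "H dvd smult (coeff p k) (G ^ k)" using homog_congruent_top_term[of H k p G] by simp
      moreover have "coeff p k \<noteq> 0" using assms(3) k_def by simp
      ultimately have "H dvd G ^ k" using dvd_smult_cancel by blast
      moreover have "coprime H (G ^ k)" using assms(1) by (simp add: ac_simps)
      ultimately have "is_unit H" using coprime_common_divisor[of H "G ^ k" H] by simp
      with False assms(2) show False by (simp add: is_unit_iff_degree)
    qed
  qed
  ultimately show ?thesis using assms(2) by simp
qed

lemma coprime_homog_den: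
  assumes "coprime G H" "coeff p n \<noteq> 0"
  shows "coprime (homog n p G H) H"
proof (rule coprimeI)
  fix e assume e: "e dvd homog n p G H" "e dvd H"
  have "H dvd homog n p G H - smult (coeff p n) (G ^ n)" by (rule homog_congruent_top_term)
  with e(2) have "e dvd homog n p G H - smult (coeff p n) (G ^ n)" by (rule dvd_trans)
  with e(1) have "e dvd homog n p G H - (homog n p G H - smult (coeff p n) (G ^ n))"
    by (rule dvd_diff)
  then have "e dvd smult (coeff p n) (G ^ n)" by simp
  with assms(2) have "e dvd G ^ n" using dvd_smult_cancel by blast
  moreover have "coprime (G ^ n) H" using assms(1) by simp
  ultimately show "is_unit e" using e(2) coprime_common_divisor by blast
qed

lemma homog_bezout:
  assumes "coprime g h" "H \<noteq> 0" "degree g \<le> n" "degree h \<le> n"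
  obtains U V N where "U * homog n g G H + V * homog n h G H = H ^ (N + n)"
proof -
  define u where "u = fst (bezout_coefficients g h)"
  define v where "v = snd (bezout_coefficients g h)"
  have uv: "u * g + v * h = 1"
    using bezout_coefficients_fst_snd[of g h] assms(1) by (simp add: u_def v_def)
  define N where "N = max (degree u) (degree v)"
  define F where "F = to_fract G / to_fract H"
  have H: "to_fract H \<noteq> 0" using assms(2) by simp
  have "poly_ratfun u F * poly_ratfun g F + poly_ratfun v F * poly_ratfun h F = 1"
    using arg_cong[OF uv, of "\<lambda>p. poly_ratfun p F"] by (simp add: poly_ratfun_mult poly_ratfun_add)
  moreover have "poly_ratfun u F = to_fract (homog N u G H) / to_fract H ^ N"
    "poly_ratfun v F = to_fract (homog N v G H) / to_fract H ^ N"
    "poly_ratfun g F = to_fract (homog n g G H) / to_fract H ^ n"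
    "poly_ratfun h F = to_fract (homog n h G H) / to_fract H ^ n"
    unfolding F_def using assms by (auto intro!: poly_ratfun_fraction simp: N_def)
  ultimately have "to_fract (homog N u G H) * to_fract (homog n g G H) +
      to_fract (homog N v G H) * to_fract (homog n h G H) = to_fract H ^ N * to_fract H ^ n"
    using H by (simp add: field_simps)
  then have "to_fract (homog N u G H * homog n g G H + homog N v G H * homog n h G H) =
      to_fract (H ^ (N + n))"
    by (simp add: power_add)
  then have "homog N u G H * homog n g G H + homog N v G H * homog n h G H = H ^ (N + n)"
    by (simp only: to_fract_eq_iff)
  then show ?thesis using that by blast
qed

lemma max_degree_attained:
  assumes "h \<noteq> 0" "n = max (degree g) (degree h)"
  obtains p where "p \<in> {g, h}" "p \<noteq> 0" "degree p = n"
proof (cases "n = degree h")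
  case False
  with assms(2) have "n = degree g" "g \<noteq> 0" by (auto simp: max_def split: if_splits)
  then show ?thesis using that[of g] by simp
qed (use assms(1) that[of h] in simp)

lemma coprime_homog:
  assumes "coprime G H" "H \<noteq> 0" "coprime g h" "h \<noteq> 0" "n = max (degree g) (degree h)"
  shows "coprime (homog n g G H) (homog n h G H)"
proof (rule coprimeI)
  fix c assume c: "c dvd homog n g G H" "c dvd homog n h G H"
  obtain U V N where "U * homog n g G H + V * homog n h G H = H ^ (N + n)"
    using homog_bezout[OF assms(3,2), of n G] assms(5) by auto
  with c have "c dvd H ^ (N + n)" by (metis dvd_add dvd_mult)
  obtain p where p: "p \<in> {g, h}" "p \<noteq> 0" "degree p = n"
    using max_degree_attained[OF assms(4,5)] .
  with c have "c dvd homog n p G H" by auto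
  moreover have "coeff p n \<noteq> 0" using p(2,3) by auto
  then have "coprime (homog n p G H) (H ^ (N + n))"
    using coprime_homog_den[OF assms(1)] by simp
  ultimately show "is_unit c" using \<open>c dvd H ^ (N + n)\<close> coprime_common_divisor by blast
qed

lemma degree_homog_le: "degree (homog n p G H) \<le> n * max (degree G) (degree H)"
  unfolding homog_def
proof (rule degree_sum_le)
  fix i assume i: "i \<in> {..n}"
  define M where "M = max (degree G) (degree H)"
  have "degree (smult (coeff p i) (G ^ i * H ^ (n - i))) \<le> degree (G ^ i) + degree (H ^ (n - i))"
    by (rule order_trans[OF degree_smult_le degree_mult_le])
  also have "\<dots> \<le> i * M + (n - i) * M"
  proof (rule add_mono)
    show "degree (G ^ i) \<le> i * M"
      by (rule order_trans[OF degree_power_le]) (simp add: M_def mult.commute)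
    show "degree (H ^ (n - i)) \<le> (n - i) * M"
      by (rule order_trans[OF degree_power_le]) (simp add: M_def mult.commute)
  qed
  also have "\<dots> = n * M" using i by (simp flip: add_mult_distrib)
  finally show "degree (smult (coeff p i) (G ^ i * H ^ (n - i))) \<le> n * M" .
qed simp

lemma coeff_homog_equal_degrees:
  fixes G H :: "'a::field_gcd poly"
  assumes "degree G = D" "degree H = D" "G \<noteq> 0" "H \<noteq> 0" "degree p \<le> n"
  shows "coeff (homog n p G H) (n * D) = lead_coeff H ^ n * poly p (lead_coeff G / lead_coeff H)"
proof -
  have lh: "lead_coeff H \<noteq> 0" using assms(4) by simp
  have "coeff (G ^ i * H ^ (n - i)) (n * D) = lead_coeff G ^ i * lead_coeff H ^ (n - i)"
    if "i \<le> n" for i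
  proof -
    have "degree (G ^ i * H ^ (n - i)) = n * D"
      using degree_monomial_product[OF assms(3,4), of i n] assms(1,2) that
      by (simp flip: add_mult_distrib)
    then show ?thesis by (metis lead_coeff_mult lead_coeff_power)
  qed
  then have "coeff (homog n p G H) (n * D) =
      (\<Sum>i\<le>n. coeff p i * (lead_coeff G ^ i * lead_coeff H ^ (n - i)))"
    unfolding homog_def coeff_sum by (intro sum.cong) auto
  also have "\<dots> = lead_coeff H ^ n * (\<Sum>i\<le>n. coeff p i * (lead_coeff G / lead_coeff H) ^ i)"
    unfolding sum_distrib_left
  proof (intro sum.cong refl)
    fix i assume "i \<in> {..n}"
    then have "lead_coeff H ^ n = lead_coeff H ^ i * lead_coeff H ^ (n - i)" by (simp flip: power_add)
    with lh show "coeff p i * (lead_coeff G ^ i * lead_coeff H ^ (n - i)) =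
        lead_coeff H ^ n * (coeff p i * (lead_coeff G / lead_coeff H) ^ i)"
      by (simp add: power_divide field_simps)
  qed
  also have "\<dots> = lead_coeff H ^ n * poly p (lead_coeff G / lead_coeff H)"
  proof -
    have "poly p t = (\<Sum>i\<le>n. coeff p i * t ^ i)" for t
      using assms(5) by (simp add: poly_altdef, intro sum.mono_neutral_left) (auto simp: coeff_eq_0)
    then show ?thesis by simp
  qed
  finally show ?thesis .
qed

lemma max_degree_homog:
  fixes g h G H :: "'a::field_gcd poly"
  assumes "coprime g h" "h \<noteq> 0" "n = max (degree g) (degree h)" "G \<noteq> 0" "H \<noteq> 0"
  shows "max (degree (homog n g G H)) (degree (homog n h G H)) = n * max (degree G) (degree H)"
proof (rule antisym)
  show "max (degree (homog n g G H)) (degree (homog n h G H)) \<le> n * max (degree G) (degree H)"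
    using degree_homog_le[of n g G H] degree_homog_le[of n h G H] by simp
  have le_n: "degree g \<le> n" "degree h \<le> n" using assms(3) by simp_all
  show "n * max (degree G) (degree H) \<le> max (degree (homog n g G H)) (degree (homog n h G H))"
  proof (cases "degree G" "degree H" rule: linorder_cases)
    case less
    obtain p where p: "p \<in> {g, h}" "poly p 0 \<noteq> 0"
      using coprime_imp_poly_nonzero_at[OF assms(1), of 0] by blast
    then have "p \<noteq> 0" "degree p \<le> n" using le_n by auto
    then have "degree (homog n p G H) = n * degree H"
      using degree_homog_less[OF _ _ assms(4,5) less] order_0I[OF p(2)] by simp
    with p less show ?thesis by auto
  next
    case greater
    obtain p where p: "p \<in> {g, h}" "p \<noteq> 0" "degree p = n"
      using max_degree_attained[OF assms(2,3)] .
    then have "degree (homog n p G H) = n * degree G"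
      using degree_homog_greater[OF p(2) _ assms(4,5) greater] by simp
    with p greater show ?thesis by auto
  next
    case equal
    define t where "t = lead_coeff G / lead_coeff H"
    have "coeff (homog n g G H) (n * degree H) \<noteq> 0 \<or> coeff (homog n h G H) (n * degree H) \<noteq> 0"
    proof (rule ccontr)
      assume "\<not> ?thesis"
      then have "poly g t = 0" "poly h t = 0"
        using coeff_homog_equal_degrees[OF equal refl assms(4,5)] le_n assms(5) t_def by auto
      with coprime_imp_poly_nonzero_at[OF assms(1)] show False by blast
    qed
    with equal show ?thesis using le_degree by fastforce
  qed
qed

lemma rcomp_conv_homog:
  fixes x F :: "'a::field_gcd ratfun"
  assumes "rdeg F \<ge> 1"
  obtains c where "is_unit c"
    "homog (rdeg x) (rnum x) (rnum F) (rden F) = rnum (rcomp x F) * c"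
    "homog (rdeg x) (rden x) (rnum F) (rden F) = rden (rcomp x F) * c"
proof -
  let ?A = "homog (rdeg x) (rnum x) (rnum F) (rden F)"
  let ?B = "homog (rdeg x) (rden x) (rnum F) (rden F)"
  let ?F = "to_fract (rnum F) / to_fract (rden F)"
  have "rcomp x F = poly_ratfun (rnum x) ?F / poly_ratfun (rden x) ?F"
    by (simp only: rcomp_conv_poly_ratfun flip: rnum_rden_eq)
  also have "\<dots> = to_fract ?A / to_fract ?B"
    using poly_ratfun_fraction[OF degree_rnum_le rden_nonzero, of x "rnum F"]
      poly_ratfun_fraction[OF degree_rden_le rden_nonzero, of x "rnum F"] by simp
  finally have "rcomp x F = to_fract ?A / to_fract ?B" .
  moreover have "coprime ?A ?B"
    by (rule coprime_homog[OF coprime_rnum_rden rden_nonzero coprime_rnum_rden rden_nonzero])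
      (simp add: rdeg_def)
  moreover have "?B \<noteq> 0"
    using assms unfolding rdeg_ge_1_iff
    by (rule homog_nonzero[OF coprime_rnum_rden rden_nonzero rden_nonzero degree_rden_le])
  ultimately show ?thesis using rnum_rden_fraction that by metis
qed

lemma rdeg_rcomp:
  fixes x F :: "'a::field_gcd ratfun"
  assumes "rdeg F \<ge> 1"
  shows "rdeg (rcomp x F) = rdeg x * rdeg F"
proof -
  obtain c where c: "is_unit c"
    "homog (rdeg x) (rnum x) (rnum F) (rden F) = rnum (rcomp x F) * c"
    "homog (rdeg x) (rden x) (rnum F) (rden F) = rden (rcomp x F) * c"
    using rcomp_conv_homog[OF assms] .
  have "rdeg (rcomp x F) = max (degree (homog (rdeg x) (rnum x) (rnum F) (rden F)))
      (degree (homog (rdeg x) (rden x) (rnum F) (rden F)))"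
    using unit_factor_invariants(1)[OF c(1) c(2)] unit_factor_invariants(1)[OF c(1) c(3)]
    by (simp add: rdeg_def)
  also have "\<dots> = rdeg x * rdeg F"
    using max_degree_homog[OF coprime_rnum_rden rden_nonzero _ rnum_nonzero[OF assms] rden_nonzero]
    by (simp add: rdeg_def)
  finally show ?thesis .
qed

definition transcendental_ratfun :: "'a::field_gcd ratfun \<Rightarrow> bool" where
  "transcendental_ratfun F \<longleftrightarrow> (\<forall>p. p \<noteq> 0 \<longrightarrow> poly_ratfun p F \<noteq> 0)"

lemma transcendental_ratfunI:
  assumes "rdeg F \<ge> 1"
  shows "transcendental_ratfun F"
  unfolding transcendental_ratfun_def
proof (intro allI impI)
  fix p :: "'a poly" assume p: "p \<noteq> 0"
  have "poly_ratfun p F = to_fract (homog (degree p) p (rnum F) (rden F)) / to_fract (rden F) ^ degree p"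
    using poly_ratfun_fraction[OF order_refl rden_nonzero, of p "rnum F" F] rnum_rden_eq[of F] by simp
  moreover have "homog (degree p) p (rnum F) (rden F) \<noteq> 0"
    using assms unfolding rdeg_ge_1_iff
    by (rule homog_nonzero[OF coprime_rnum_rden rden_nonzero p order_refl])
  ultimately show "poly_ratfun p F \<noteq> 0" by simp
qed

context
  fixes F :: "'a::field_gcd ratfun"
  assumes F: "transcendental_ratfun F"
begin

lemma rcomp_fraction:
  assumes "q \<noteq> 0"
  shows "rcomp (to_fract p / to_fract q) F = poly_ratfun p F / poly_ratfun q F"
proof -
  define x where "x = to_fract p / to_fract q"
  have "to_fract p * to_fract (rden x) = to_fract q * to_fract (rnum x)"
    using rnum_rden_eq[of x] assms unfolding x_def by (simp add: field_simps)
  then have "p * rden x = q * rnum x" by (simp flip: to_fract_mult)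
  then have e: "poly_ratfun p F * poly_ratfun (rden x) F = poly_ratfun q F * poly_ratfun (rnum x) F"
    by (metis poly_ratfun_mult)
  have "poly_ratfun q F \<noteq> 0" "poly_ratfun (rden x) F \<noteq> 0"
    using assms F rden_nonzero unfolding transcendental_ratfun_def by auto
  with e have "poly_ratfun (rnum x) F / poly_ratfun (rden x) F = poly_ratfun p F / poly_ratfun q F"
    by (simp add: field_simps)
  then show ?thesis unfolding x_def[symmetric] rcomp_conv_poly_ratfun .
qed

lemma poly_ratfun_rden_nonzero: "poly_ratfun (rden x) F \<noteq> 0"
  using F unfolding transcendental_ratfun_def by simp

lemma rcomp_mult: "rcomp (x * y) F = rcomp x F * rcomp y F"
proof -
  have e: "x * y = to_fract (rnum x * rnum y) / to_fract (rden x * rden y)"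
    using rnum_rden_eq[of x] rnum_rden_eq[of y] by (metis times_divide_times_eq to_fract_mult)
  have "rcomp (x * y) F = poly_ratfun (rnum x * rnum y) F / poly_ratfun (rden x * rden y) F"
    unfolding e by (rule rcomp_fraction) simp
  then show ?thesis by (simp add: poly_ratfun_mult rcomp_conv_poly_ratfun)
qed

lemma rcomp_add: "rcomp (x + y) F = rcomp x F + rcomp y F"
proof -
  have e: "x + y = to_fract (rnum x * rden y + rnum y * rden x) / to_fract (rden x * rden y)"
    by (subst rnum_rden_eq[of x], subst rnum_rden_eq[of y]) (simp add: field_simps)
  have "rcomp (x + y) F =
      poly_ratfun (rnum x * rden y + rnum y * rden x) F / poly_ratfun (rden x * rden y) F"
    unfolding e by (rule rcomp_fraction) simp
  with poly_ratfun_rden_nonzero[of x] poly_ratfun_rden_nonzero[of y] show ?thesis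
    by (simp add: poly_ratfun_mult poly_ratfun_add rcomp_conv_poly_ratfun field_simps)
qed

lemma rcomp_divide: "rcomp (x / y) F = rcomp x F / rcomp y F"
proof (cases "y = 0")
  case False
  then have ny: "rnum y \<noteq> 0" by (simp add: rnum_def)
  have e: "x / y = to_fract (rnum x * rden y) / to_fract (rden x * rnum y)"
    using ny by (subst rnum_rden_eq[of x], subst rnum_rden_eq[of y]) (simp add: field_simps)
  have "rcomp (x / y) F = poly_ratfun (rnum x * rden y) F / poly_ratfun (rden x * rnum y) F"
    unfolding e by (rule rcomp_fraction) (simp add: ny)
  moreover have "poly_ratfun (rnum y) F \<noteq> 0"
    using F ny unfolding transcendental_ratfun_def by auto
  ultimately show ?thesis using poly_ratfun_rden_nonzero[of x] poly_ratfun_rden_nonzero[of y]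
    by (simp add: poly_ratfun_mult rcomp_conv_poly_ratfun field_simps)
qed (simp add: rcomp_conv_poly_ratfun rnum_def)

lemma rcomp_const_fract: "rcomp (const_fract a) F = const_fract a"
  using rcomp_fraction[of 1 "[:a:]"] by (simp add: const_fract_def)

lemma rcomp_X: "rcomp (to_fract [:0, 1:]) F = F"
  using rcomp_fraction[of 1 "[:0, 1:]"] by simp

lemma rcomp_poly_ratfun: "rcomp (poly_ratfun g P) F = poly_ratfun g (rcomp P F)"
proof (induct g rule: pCons_induct)
  case 0
  then show ?case by (simp add: rcomp_conv_poly_ratfun rnum_def)
next
  case (pCons a g)
  then show ?case by (simp add: poly_ratfun_pCons rcomp_add rcomp_mult rcomp_const_fract)
qed

lemma funpow_rcomp: "(rcomp f ^^ j) F = rcomp (riter f j) F"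
proof (induct j)
  case 0
  then show ?case by (simp add: riter_def rcomp_X)
next
  case (Suc j)
  have "rcomp (riter f (Suc j)) F = rcomp f (rcomp (riter f j) F)"
    by (simp add: riter_def rcomp_conv_poly_ratfun[of f] rcomp_divide rcomp_poly_ratfun)
  with Suc show ?case by simp
qed

end

lemma riter_add:
  assumes "rdeg (riter f k) \<ge> 1"
  shows "riter f (j + k) = rcomp (riter f j) (riter f k)"
  using funpow_rcomp[OF transcendental_ratfunI[OF assms], where f = f and j = j] by (simp add: riter_def funpow_add)

lemma rdeg_riter: "rdeg f \<ge> 1 \<Longrightarrow> rdeg (riter f k) = rdeg f ^ k"
proof (induct k)
  case 0
  then show ?case by (simp add: rdeg_def riter_def rnum_def rden_def)
next
  case (Suc k)
  then have "rdeg (riter f k) \<ge> 1" by simp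
  then have "rdeg (rcomp f (riter f k)) = rdeg f * rdeg (riter f k)" by (rule rdeg_rcomp)
  with Suc show ?case by (simp add: riter_def)
qed

lemma defect_of_mixed_degree:
  fixes n q a D :: nat
  assumes "q \<le> n" "a \<le> D"
  shows "n * D - (q * a + (n - q) * D) = q * (D - a)"
proof -
  obtain r where "n = q + r" using assms(1) le_iff_add by blast
  moreover obtain e where "D = a + e" using assms(2) le_iff_add by blast
  ultimately show ?thesis by (simp add: algebra_simps)
qed

locale nonconstant_ratfun =
  fixes f :: "'a::field_gcd ratfun"
  assumes rdeg_ge_1: "rdeg f \<ge> 1"
begin

abbreviation d :: nat where "d \<equiv> rdeg f"

lemma rdeg_riter_ge_1: "rdeg (riter f k) \<ge> 1"
  using rdeg_riter[OF rdeg_ge_1, of k] rdeg_ge_1 by simp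

lemma max_degree_gk_hk: "max (degree (gk f k)) (degree (hk f k)) = d ^ k"
  using rdeg_riter[OF rdeg_ge_1, of k] by (simp add: rdeg_def gk_def hk_def)

lemma gk_nonzero: "gk f k \<noteq> 0"
  using rnum_nonzero[OF rdeg_riter_ge_1] by (simp add: gk_def)

lemma hk_nonzero: "hk f k \<noteq> 0"
  by (simp add: hk_def)

lemma coprime_gk_hk: "coprime (gk f k) (hk f k)"
  by (simp add: gk_def hk_def coprime_rnum_rden)

lemma degree_gk_le: "degree (gk f k) \<le> d ^ k"
  using max_degree_gk_hk[of k] by linarith

lemma degree_hk_le: "degree (hk f k) \<le> d ^ k"
  using max_degree_gk_hk[of k] by linarith

lemma Sk_le: "Sk f k \<le> d ^ k"
  using order_degree[OF gk_nonzero, of 0 k] degree_gk_le[of k] by (simp add: Sk_def)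

lemma Tk_le: "Tk f k \<le> d ^ k"
  using order_degree[OF hk_nonzero, of 0 k] degree_hk_le[of k] by (simp add: Tk_def)

lemma Sk_or_Tk_eq_0: "Sk f k = 0 \<or> Tk f k = 0"
  using coprime_imp_poly_nonzero_at[OF coprime_gk_hk[of k], of 0] by (auto simp: Sk_def Tk_def order_0I)

lemma poly_gk_0_eq_0_iff: "poly (gk f k) 0 = 0 \<longleftrightarrow> 0 < Sk f k"
  using order_gt_0_iff[OF gk_nonzero] by (simp add: Sk_def)

lemma poly_hk_0_eq_0_iff: "poly (hk f k) 0 = 0 \<longleftrightarrow> 0 < Tk f k"
  using order_gt_0_iff[OF hk_nonzero] by (simp add: Tk_def)

lemma iterate_0: "degree (gk f 0) = 1" "degree (hk f 0) = 0" "Sk f 0 = 1" "Tk f 0 = 0"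
  by (simp_all add: gk_def hk_def Sk_def Tk_def riter_def rnum_def rden_def
      order_power_n_n[of 0 1, simplified])

lemma iterate_add_conv_homog:
  obtains c where "is_unit c"
    "homog (d ^ j) (gk f j) (gk f k) (hk f k) = gk f (j + k) * c"
    "homog (d ^ j) (hk f j) (gk f k) (hk f k) = hk f (j + k) * c"
proof -
  have "riter f (j + k) = rcomp (riter f j) (riter f k)"
    by (rule riter_add[OF rdeg_riter_ge_1])
  then show ?thesis
    using rcomp_conv_homog[OF rdeg_riter_ge_1, of "riter f j" k] rdeg_riter[OF rdeg_ge_1, of j] that
    unfolding gk_def hk_def by metis
qed

lemma defects_add_of_less:
  assumes "degree (gk f k) < degree (hk f k)"
  shows "d ^ (j + k) - degree (gk f (j + k)) = Sk f j * (d ^ k - degree (gk f k))"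
    and "d ^ (j + k) - degree (hk f (j + k)) = Tk f j * (d ^ k - degree (gk f k))"
proof -
  obtain c where c: "is_unit c" "homog (d ^ j) (gk f j) (gk f k) (hk f k) = gk f (j + k) * c"
    "homog (d ^ j) (hk f j) (gk f k) (hk f k) = hk f (j + k) * c"
    by (rule iterate_add_conv_homog)
  have hk: "degree (hk f k) = d ^ k" using max_degree_gk_hk[of k] assms by simp
  have "degree (gk f (j + k)) = Sk f j * degree (gk f k) + (d ^ j - Sk f j) * d ^ k"
    using degree_homog_less[OF gk_nonzero degree_gk_le gk_nonzero hk_nonzero assms]
      unit_factor_invariants(1)[OF c(1) c(2)] hk by (simp add: Sk_def)
  then show "d ^ (j + k) - degree (gk f (j + k)) = Sk f j * (d ^ k - degree (gk f k))"
    using defect_of_mixed_degree[OF Sk_le degree_gk_le] by (simp add: power_add)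
  have "degree (hk f (j + k)) = Tk f j * degree (gk f k) + (d ^ j - Tk f j) * d ^ k"
    using degree_homog_less[OF hk_nonzero degree_hk_le gk_nonzero hk_nonzero assms]
      unit_factor_invariants(1)[OF c(1) c(3)] hk by (simp add: Tk_def)
  then show "d ^ (j + k) - degree (hk f (j + k)) = Tk f j * (d ^ k - degree (gk f k))"
    using defect_of_mixed_degree[OF Tk_le degree_gk_le] by (simp add: power_add)
qed

lemma defects_add_of_greater:
  assumes "degree (hk f k) < degree (gk f k)"
  shows "d ^ (j + k) - degree (gk f (j + k)) = (d ^ j - degree (gk f j)) * (d ^ k - degree (hk f k))"
    and "d ^ (j + k) - degree (hk f (j + k)) = (d ^ j - degree (hk f j)) * (d ^ k - degree (hk f k))"
proof -
  obtain c where c: "is_unit c" "homog (d ^ j) (gk f j) (gk f k) (hk f k) = gk f (j + k) * c"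
    "homog (d ^ j) (hk f j) (gk f k) (hk f k) = hk f (j + k) * c"
    by (rule iterate_add_conv_homog)
  have gk: "degree (gk f k) = d ^ k" using max_degree_gk_hk[of k] assms by simp
  have "degree (gk f (j + k)) = (d ^ j - degree (gk f j)) * degree (hk f k) +
      (d ^ j - (d ^ j - degree (gk f j))) * d ^ k"
    using degree_homog_greater[OF gk_nonzero degree_gk_le gk_nonzero hk_nonzero assms]
      unit_factor_invariants(1)[OF c(1) c(2)] gk degree_gk_le[of j] by (simp add: add.commute)
  then show "d ^ (j + k) - degree (gk f (j + k)) = (d ^ j - degree (gk f j)) * (d ^ k - degree (hk f k))"
    using defect_of_mixed_degree[OF _ degree_hk_le, of "d ^ j - degree (gk f j)" "d ^ j"]
    by (simp add: power_add)
  have "degree (hk f (j + k)) = (d ^ j - degree (hk f j)) * degree (hk f k) +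
      (d ^ j - (d ^ j - degree (hk f j))) * d ^ k"
    using degree_homog_greater[OF hk_nonzero degree_hk_le gk_nonzero hk_nonzero assms]
      unit_factor_invariants(1)[OF c(1) c(3)] gk degree_hk_le[of j] by (simp add: add.commute)
  then show "d ^ (j + k) - degree (hk f (j + k)) = (d ^ j - degree (hk f j)) * (d ^ k - degree (hk f k))"
    using defect_of_mixed_degree[OF _ degree_hk_le, of "d ^ j - degree (hk f j)" "d ^ j"]
    by (simp add: power_add)
qed

lemma orders_add_of_num_root:
  assumes "0 < Sk f k"
  shows "Sk f (j + k) = Sk f j * Sk f k" and "Tk f (j + k) = Tk f j * Sk f k"
proof -
  obtain c where c: "is_unit c" "homog (d ^ j) (gk f j) (gk f k) (hk f k) = gk f (j + k) * c"
    "homog (d ^ j) (hk f j) (gk f k) (hk f k) = hk f (j + k) * c"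
    by (rule iterate_add_conv_homog)
  have g0: "poly (gk f k) 0 = 0" using assms poly_gk_0_eq_0_iff by simp
  then have h0: "poly (hk f k) 0 \<noteq> 0" using coprime_imp_poly_nonzero_at[OF coprime_gk_hk] by blast
  show "Sk f (j + k) = Sk f j * Sk f k" "Tk f (j + k) = Tk f j * Sk f k"
    using order_homog_root_num[OF gk_nonzero degree_gk_le gk_nonzero hk_nonzero g0 h0]
      order_homog_root_num[OF hk_nonzero degree_hk_le gk_nonzero hk_nonzero g0 h0]
      unit_factor_invariants(2)[OF c(1) c(2)] unit_factor_invariants(2)[OF c(1) c(3)]
    by (simp_all add: Sk_def Tk_def)
qed

lemma orders_add_of_den_root:
  assumes "0 < Tk f k"
  shows "Sk f (j + k) = (d ^ j - degree (gk f j)) * Tk f k"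
    and "Tk f (j + k) = (d ^ j - degree (hk f j)) * Tk f k"
proof -
  obtain c where c: "is_unit c" "homog (d ^ j) (gk f j) (gk f k) (hk f k) = gk f (j + k) * c"
    "homog (d ^ j) (hk f j) (gk f k) (hk f k) = hk f (j + k) * c"
    by (rule iterate_add_conv_homog)
  have h0: "poly (hk f k) 0 = 0" using assms poly_hk_0_eq_0_iff by simp
  then have g0: "poly (gk f k) 0 \<noteq> 0" using coprime_imp_poly_nonzero_at[OF coprime_gk_hk] by blast
  show "Sk f (j + k) = (d ^ j - degree (gk f j)) * Tk f k"
    "Tk f (j + k) = (d ^ j - degree (hk f j)) * Tk f k"
    using order_homog_root_den[OF gk_nonzero degree_gk_le gk_nonzero hk_nonzero h0 g0]
      order_homog_root_den[OF hk_nonzero degree_hk_le gk_nonzero hk_nonzero h0 g0]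
      unit_factor_invariants(2)[OF c(1) c(2)] unit_factor_invariants(2)[OF c(1) c(3)]
    by (simp_all add: Sk_def Tk_def)
qed

end

lemma least_pos_eq_enatD:
  assumes "least_pos P = enat m"
  shows "0 < m" "P m" "\<And>k. 0 < k \<Longrightarrow> k < m \<Longrightarrow> \<not> P k"
proof -
  have ex: "\<exists>k>0. P k" using assms unfolding least_pos_def by (auto split: if_splits)
  then have m: "m = (LEAST k. 0 < k \<and> P k)" using assms unfolding least_pos_def by simp
  show "0 < m" "P m" unfolding m using LeastI_ex[OF ex] by auto
  show "\<And>k. 0 < k \<Longrightarrow> k < m \<Longrightarrow> \<not> P k" unfolding m using not_less_Least by blast
qed

lemma least_pos_less_imp_not:
  assumes "0 < k" "enat k < least_pos P"
  shows "\<not> P k"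
proof (cases "least_pos P")
  case (enat m)
  with assms show ?thesis using least_pos_eq_enatD(3)[OF enat] by simp
next
  case infinity
  with assms show ?thesis unfolding least_pos_def by (metis enat.distinct(1) not_gr0)
qed

lemma least_pos_eq_enatI:
  assumes "0 < m" "P m" "\<And>k. 0 < k \<Longrightarrow> k < m \<Longrightarrow> \<not> P k"
  shows "least_pos P = enat m"
proof -
  have "(LEAST k. 0 < k \<and> P k) = m"
    by (rule Least_equality) (use assms in \<open>auto simp: not_less[symmetric]\<close>)
  with assms show ?thesis unfolding least_pos_def by auto
qed

text \<open>
  \<open>dg k\<close>, \<open>dh k\<close>, \<open>S k\<close>, \<open>T k\<close> stand for \<open>deg g_k\<close>, \<open>deg h_k\<close>, \<open>S_k\<close>, \<open>T_k\<close>; only the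
  composition laws of the iterates are assumed.
\<close>

locale iterate_laws =
  fixes d :: nat and dg dh S T :: "nat \<Rightarrow> nat"
  assumes max_degrees: "\<And>k. max (dg k) (dh k) = d ^ k"
    and initial: "dg 0 = 1" "dh 0 = 0" "S 0 = 1" "T 0 = 0"
    and S_or_T_eq_0: "\<And>k. S k = 0 \<or> T k = 0"
    and defects_add_of_less: "\<And>j k. dg k < dh k \<Longrightarrow>
      d ^ (j + k) - dg (j + k) = S j * (d ^ k - dg k) \<and> d ^ (j + k) - dh (j + k) = T j * (d ^ k - dg k)"
    and defects_add_of_greater: "\<And>j k. dh k < dg k \<Longrightarrow>
      d ^ (j + k) - dg (j + k) = (d ^ j - dg j) * (d ^ k - dh k) \<and>
      d ^ (j + k) - dh (j + k) = (d ^ j - dh j) * (d ^ k - dh k)"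
    and orders_add_of_num_root: "\<And>j k. 0 < S k \<Longrightarrow>
      S (j + k) = S j * S k \<and> T (j + k) = T j * S k"
    and orders_add_of_den_root: "\<And>j k. 0 < T k \<Longrightarrow>
      S (j + k) = (d ^ j - dg j) * T k \<and> T (j + k) = (d ^ j - dh j) * T k"
begin

definition mu :: enat where "mu = least_pos (\<lambda>k. dg k < dh k)"
definition nu :: enat where "nu = least_pos (\<lambda>k. dg k > dh k)"
definition e :: enat where "e = least_pos (\<lambda>k. 0 < S k)"
definition eps :: enat where "eps = least_pos (\<lambda>k. 0 < T k)"
definition del :: nat where "del = (let m = the_enat (min mu nu) in nat \<bar>int (dg m) - int (dh m)\<bar>)"

lemma dg_le: "dg k \<le> d ^ k"
  using max_degrees[of k] by linarith

lemma dh_le: "dh k \<le> d ^ k"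
  using max_degrees[of k] by linarith

lemma degrees_full_if_equal: "\<not> dg k < dh k \<Longrightarrow> \<not> dh k < dg k \<Longrightarrow> dg k = d ^ k \<and> dh k = d ^ k"
  using max_degrees[of k] by (auto simp: max_def)

lemma int_dg_eq: "d ^ k - dg k = x \<Longrightarrow> int (dg k) = int (d ^ k) - int x"
  using dg_le[of k] by auto

lemma int_dh_eq: "d ^ k - dh k = x \<Longrightarrow> int (dh k) = int (d ^ k) - int x"
  using dh_le[of k] by auto

lemma degrees_full_if_no_defect:
  "d ^ k - dg k = 0 \<Longrightarrow> d ^ k - dh k = 0 \<Longrightarrow> dg k = d ^ k \<and> dh k = d ^ k"
  using dg_le[of k] dh_le[of k] by simp

context
  fixes n assumes nu_eq: "nu = enat n" and nu_less_mu: "nu < mu"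
begin

lemma nu_pos: "0 < n" and dh_less_dg_nu: "dh n < dg n"
  using least_pos_eq_enatD[OF nu_eq[unfolded nu_def]] by auto

lemma degrees_full_below_nu:
  assumes "0 < k" "k < n"
  shows "dg k = d ^ k \<and> dh k = d ^ k"
proof (rule degrees_full_if_equal)
  have "enat k < mu" using assms(2) nu_eq nu_less_mu less_trans[of "enat k" "enat n" mu] by simp
  then show "\<not> dg k < dh k" using least_pos_less_imp_not[OF assms(1)] unfolding mu_def by blast
  show "\<not> dh k < dg k" using least_pos_eq_enatD(3)[OF nu_eq[unfolded nu_def]] assms by blast
qed

lemma del_eq_nu: "del = d ^ n - dh n"
proof -
  have "min mu nu = enat n" using nu_eq min.absorb2[OF less_imp_le[OF nu_less_mu]] by simp
  then have "del = nat \<bar>int (dg n) - int (dh n)\<bar>" by (simp add: del_def)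
  also have "\<dots> = dg n - dh n" using dh_less_dg_nu by arith
  finally show ?thesis using dh_less_dg_nu max_degrees[of n] by (simp add: max_def)
qed

lemma defects_nu_multiple:
  assumes "r < n"
  shows "d ^ (i * n + r) - dg (i * n + r) = 0 \<and> d ^ (i * n + r) - dh (i * n + r) = del ^ i * (d ^ r - dh r)"
proof (induct i)
  case 0
  then show ?case using initial degrees_full_below_nu[of r] assms by (cases "r = 0") auto
next
  case (Suc i)
  have "Suc i * n + r = (i * n + r) + n" by simp
  then show ?case
    unfolding \<open>Suc i * n + r = (i * n + r) + n\<close> using Suc defects_add_of_greater[OF dh_less_dg_nu, of "i * n + r"] dg_le[of n] dh_less_dg_nu
      max_degrees[of n] del_eq_nu by (simp add: max_def)
qed

end

lemma case_nu_less_mu: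
  assumes "nu < mu"
  defines "n \<equiv> the_enat nu"
  shows "(\<forall>i\<ge>1. dg (i * n) = d ^ (i * n) \<and> int (dh (i * n)) = int (d ^ (i * n)) - int (del ^ i)) \<and>
    (\<forall>k\<ge>1. \<not> n dvd k \<longrightarrow> dg k = d ^ k \<and> dh k = d ^ k)"
proof -
  have nu: "nu = enat n" using assms(1) by (cases nu) (simp_all add: n_def)
  show ?thesis
  proof (rule conjI; intro allI impI)
    fix i :: nat
    have "d ^ (i * n) - dg (i * n) = 0" "d ^ (i * n) - dh (i * n) = del ^ i"
      using defects_nu_multiple[OF nu assms(1) nu_pos[OF nu assms(1)], of i] initial by simp_all
    then show "dg (i * n) = d ^ (i * n) \<and> int (dh (i * n)) = int (d ^ (i * n)) - int (del ^ i)"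
      using dg_le[of "i * n"] int_dh_eq by simp
  next
    fix k :: nat assume k: "k \<ge> 1" "\<not> n dvd k"
    define r where "r = k mod n"
    have r: "0 < r" "r < n"
      using k nu_pos[OF nu assms(1)] by (auto simp: r_def mod_greater_zero_iff_not_dvd)
    have "k = k div n * n + r" by (simp add: r_def)
    then show "dg k = d ^ k \<and> dh k = d ^ k"
      using defects_nu_multiple[OF nu assms(1) r(2), of "k div n"]
        degrees_full_below_nu[OF nu assms(1) r] degrees_full_if_no_defect[of k] by simp
  qed
qed

context
  fixes m assumes mu_eq: "mu = enat m" and mu_less_nu: "mu < nu"
begin

lemma dg_less_dh_mu: "dg m < dh m"
  using least_pos_eq_enatD[OF mu_eq[unfolded mu_def]] by auto

lemma degrees_full_below_mu:
  assumes "0 < k" "k < m"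
  shows "dg k = d ^ k \<and> dh k = d ^ k"
proof (rule degrees_full_if_equal)
  show "\<not> dg k < dh k" using least_pos_eq_enatD(3)[OF mu_eq[unfolded mu_def]] assms by blast
  have "enat k < nu" using assms(2) mu_eq mu_less_nu less_trans[of "enat k" "enat m" nu] by simp
  then show "\<not> dh k < dg k" using least_pos_less_imp_not[OF assms(1)] unfolding nu_def by blast
qed

lemma del_eq_mu: "del = d ^ m - dg m"
proof -
  have "min mu nu = enat m" using mu_eq min.absorb1[OF less_imp_le[OF mu_less_nu]] by simp
  then have "del = nat \<bar>int (dg m) - int (dh m)\<bar>" by (simp add: del_def)
  also have "\<dots> = dh m - dg m" using dg_less_dh_mu by arith
  finally show ?thesis using dg_less_dh_mu max_degrees[of m] by (simp add: max_def)
qed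

lemma del_pos: "0 < del"
  using del_eq_mu dg_less_dh_mu dh_le[of m] by simp

lemma defects_after_mu: "d ^ (j + m) - dg (j + m) = S j * del \<and> d ^ (j + m) - dh (j + m) = T j * del"
  using defects_add_of_less[OF dg_less_dh_mu, of j] del_eq_mu by simp

lemma degrees_after_mu:
  "int (dg (m + j)) = int (d ^ (m + j)) - int (del * S j) \<and>
   int (dh (m + j)) = int (d ^ (m + j)) - int (del * T j)"
  using defects_after_mu[of j] int_dg_eq[of "m + j"] int_dh_eq[of "m + j"] by (simp add: ac_simps)

lemma degrees_full_after_mu: "S j = 0 \<Longrightarrow> T j = 0 \<Longrightarrow> dg (j + m) = d ^ (j + m) \<and> dh (j + m) = d ^ (j + m)"
  using defects_after_mu[of j] degrees_full_if_no_defect[of "j + m"] by simp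

lemma degrees_full_if_no_orders:
  assumes "k \<ge> 1" "\<And>j. k = j + m \<Longrightarrow> S j = 0 \<and> T j = 0"
  shows "dg k = d ^ k \<and> dh k = d ^ k"
proof (cases "k < m")
  case True
  with assms(1) show ?thesis using degrees_full_below_mu by simp
next
  case False
  then have "k = (k - m) + m" by simp
  with assms(2)[OF this] degrees_full_after_mu[of "k - m"] show ?thesis by simp
qed

end

lemma case_mu_less_nu_no_roots:
  assumes "mu < nu" "eps = \<infinity>" "e = \<infinity>" "k \<ge> 1" "enat k \<noteq> mu"
  shows "dg k = d ^ k \<and> dh k = d ^ k"
proof -
  obtain m where m: "mu = enat m" using assms(1) by (cases mu) auto
  show ?thesis
  proof (rule degrees_full_if_no_orders[OF m assms(1,4)])
    fix j assume "k = j + m"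
    with assms(5) m have "0 < j" by auto
    then show "S j = 0 \<and> T j = 0"
      using least_pos_less_imp_not[of j "\<lambda>k. 0 < S k"] least_pos_less_imp_not[of j "\<lambda>k. 0 < T k"]
        assms(2,3) unfolding e_def eps_def by simp
  qed
qed

context
  fixes p assumes e_eq: "e = enat p" and e_less_eps: "e < eps"
begin

lemma e_pos: "0 < p" and S_e_pos: "0 < S p" and S_eq_0_below_e: "0 < k \<Longrightarrow> k < p \<Longrightarrow> S k = 0"
  using least_pos_eq_enatD[OF e_eq[unfolded e_def]] by auto

lemma T_eq_0_upto_e: "k \<le> p \<Longrightarrow> T k = 0"
proof (cases "k = 0")
  case False
  assume "k \<le> p"
  then have "enat k < eps" using e_eq e_less_eps le_less_trans[of "enat k" "enat p" eps] by simp
  with False show ?thesis using least_pos_less_imp_not[of k "\<lambda>k. 0 < T k"] unfolding eps_def by simp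
qed (simp add: initial)

lemma orders_e_multiple: "S (i * p + r) = S p ^ i * S r \<and> T (i * p + r) = S p ^ i * T r"
proof (induct i)
  case (Suc i)
  have "Suc i * p + r = (i * p + r) + p" by simp
  then show ?case
    unfolding \<open>Suc i * p + r = (i * p + r) + p\<close> using Suc orders_add_of_num_root[OF S_e_pos, of "i * p + r"]
    by (simp add: mult_ac)
qed simp

end

lemma case_mu_less_nu_e_less_eps:
  assumes "mu < nu" "e < eps"
  defines "m \<equiv> the_enat mu" and "p \<equiv> the_enat e"
  shows "(\<forall>i. int (dg (i * p + m)) = int (d ^ (i * p + m)) - int (del * S p ^ i) \<and>
      dh (i * p + m) = d ^ (i * p + m)) \<and>
    (\<forall>k\<ge>1. (\<nexists>i. k = i * p + m) \<longrightarrow> dg k = d ^ k \<and> dh k = d ^ k)"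
proof -
  have mu: "mu = enat m" using assms(1) by (cases mu) (simp_all add: m_def)
  have e: "e = enat p" using assms(2) by (cases e) (simp_all add: p_def)
  show ?thesis
  proof (rule conjI; intro allI impI)
    fix i
    have "S (i * p) = S p ^ i" "T (i * p) = 0"
      using orders_e_multiple[OF e assms(2), of i 0] initial by simp_all
    with degrees_after_mu[OF mu assms(1), of "i * p"] show
      "int (dg (i * p + m)) = int (d ^ (i * p + m)) - int (del * S p ^ i) \<and> dh (i * p + m) = d ^ (i * p + m)"
      by (simp add: add.commute)
  next
    fix k :: nat assume k: "k \<ge> 1" "\<nexists>i. k = i * p + m"
    show "dg k = d ^ k \<and> dh k = d ^ k"
    proof (rule degrees_full_if_no_orders[OF mu assms(1) k(1)])
      fix j assume j: "k = j + m"
      define r where "r = j mod p"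
      have jr: "j = j div p * p + r" by (simp add: r_def)
      have "0 < r"
      proof (rule ccontr)
        assume "\<not> 0 < r"
        with j jr have "k = j div p * p + m" by simp
        with k(2) show False by blast
      qed
      moreover have "r < p" using e_pos[OF e assms(2)] by (simp add: r_def)
      ultimately have "S r = 0" "T r = 0"
        using S_eq_0_below_e[OF e assms(2)] T_eq_0_upto_e[OF e assms(2)] by auto
      then show "S j = 0 \<and> T j = 0" using orders_e_multiple[OF e assms(2), of "j div p" r] jr by simp
    qed
  qed
qed

context
  fixes m q assumes mu_eq: "mu = enat m" and mu_less_nu: "mu < nu" and eps_eq: "eps = enat q"
begin

lemma eps_pos: "0 < q" and T_eps_pos: "0 < T q" and T_eq_0_below_eps: "0 < k \<Longrightarrow> k < q \<Longrightarrow> T k = 0"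
  using least_pos_eq_enatD[OF eps_eq[unfolded eps_def]] by auto

text \<open>If \<open>g_k(0) = 0\<close> with \<open>k < \<epsilon>\<close>, then \<open>T_\<epsilon> = T_(\<epsilon>-k) S_k\<close> would give \<open>h_(\<epsilon>-k)(0) = 0\<close>.\<close>

lemma S_eq_0_below_eps:
  assumes "0 < k" "k < q"
  shows "S k = 0"
proof (rule ccontr)
  assume "S k \<noteq> 0"
  then have "T q = T (q - k) * S k" using orders_add_of_num_root[of k "q - k"] assms by simp
  then have "0 < T (q - k)" using T_eps_pos by (cases "T (q - k)") auto
  with assms show False using T_eq_0_below_eps[of "q - k"] by simp
qed

lemma S_eps_eq_0: "S q = 0"
  using S_or_T_eq_0[of q] T_eps_pos by auto

lemma orders_add_period:
  "S (l + (q + m)) = del * T q * S l \<and> T (l + (q + m)) = del * T q * T l"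
proof -
  have "l + (q + m) = (l + m) + q" by simp
  then show ?thesis
    unfolding \<open>l + (q + m) = (l + m) + q\<close> using orders_add_of_den_root[OF T_eps_pos, of "l + m"] defects_after_mu[OF mu_eq mu_less_nu, of l]
    by (simp add: mult_ac)
qed

lemma orders_period_multiple:
  "S (i * (q + m) + r) = (del * T q) ^ i * S r \<and> T (i * (q + m) + r) = (del * T q) ^ i * T r"
proof (induct i)
  case (Suc i)
  have "Suc i * (q + m) + r = (i * (q + m) + r) + (q + m)" by simp
  then show ?case
    unfolding \<open>Suc i * (q + m) + r = (i * (q + m) + r) + (q + m)\<close>
    using Suc orders_add_period[of "i * (q + m) + r"] by (simp add: mult_ac)
qed simp

lemma orders_eq_0_in_period:
  assumes "0 < r" "r < q + m" "r \<noteq> q"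
  shows "S r = 0 \<and> T r = 0"
proof (cases "r < q")
  case True
  with assms show ?thesis using S_eq_0_below_eps T_eq_0_below_eps by simp
next
  case False
  define j where "j = r - q"
  from False assms have j: "0 < j" "j < m" "r = j + q" by (auto simp: j_def)
  then have "dg j = d ^ j" "dh j = d ^ j" using degrees_full_below_mu[OF mu_eq mu_less_nu] by auto
  with j(3) show ?thesis using orders_add_of_den_root[OF T_eps_pos, of j] by simp
qed

lemma e_eq_eps_plus_mu: "e = enat (q + m)"
  unfolding e_def
proof (rule least_pos_eq_enatI)
  show "0 < q + m" using eps_pos by simp
  show "0 < S (q + m)"
    using orders_add_period[of 0] initial del_pos[OF mu_eq mu_less_nu] T_eps_pos by simp
  show "\<not> 0 < S k" if "0 < k" "k < q + m" for k
    using that orders_eq_0_in_period[of k] S_eps_eq_0 by (cases "k = q") auto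
qed

end

lemma case_mu_less_nu_eps_finite:
  assumes "mu < nu" "eps < \<infinity>"
  defines "m \<equiv> the_enat mu" and "q \<equiv> the_enat eps" and "E \<equiv> the_enat e"
  shows "e = eps + mu \<and>
    (\<forall>k\<ge>1. int (dg (m + k)) = int (d ^ (m + k)) - int (del * S k) \<and>
      int (dh (m + k)) = int (d ^ (m + k)) - int (del * T k)) \<and>
    (\<forall>i\<ge>1. S (i * E) = del ^ i * T q ^ i \<and> T (i * E) = 0) \<and>
    (\<forall>i. T (i * E + q) = del ^ i * T q ^ (i + 1) \<and> S (i * E + q) = 0) \<and>
    (\<forall>k\<ge>1. (\<nexists>i. i \<ge> 1 \<and> k = i * E) \<longrightarrow> (\<nexists>i. k = i * E + q) \<longrightarrow>
      S k = 0 \<and> T k = 0)"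
proof -
  have mu: "mu = enat m" using assms(1) by (cases mu) (simp_all add: m_def)
  have eps: "eps = enat q" using assms(2) by (cases eps) (simp_all add: q_def)
  note period = mu assms(1) eps
  have E: "E = q + m" using e_eq_eps_plus_mu[OF period] by (simp add: E_def)
  have "\<forall>i. S (i * (q + m)) = del ^ i * T q ^ i \<and> T (i * (q + m)) = 0"
    using orders_period_multiple[OF period, of _ 0] initial by (simp add: power_mult_distrib)
  moreover have "\<forall>i. T (i * (q + m) + q) = del ^ i * T q ^ (i + 1) \<and> S (i * (q + m) + q) = 0"
    using orders_period_multiple[OF period, of _ q] S_eps_eq_0[OF period] by (simp add: power_mult_distrib)
  moreover have "S k = 0 \<and> T k = 0"
    if k: "k \<ge> 1" "\<nexists>i. i \<ge> 1 \<and> k = i * (q + m)" "\<nexists>i. k = i * (q + m) + q" for k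
  proof -
    define r where "r = k mod (q + m)"
    define i where "i = k div (q + m)"
    have kr: "k = i * (q + m) + r" using div_mult_mod_eq[of k "q + m"] by (simp add: r_def i_def)
    have "r \<noteq> 0"
    proof
      assume "r = 0"
      with kr have "k = i * (q + m)" by simp
      moreover from this k(1) have "i \<ge> 1" by (cases i) auto
      ultimately show False using k(2) by blast
    qed
    moreover have "r < q + m" using eps_pos[OF period] by (simp add: r_def)
    moreover have "r \<noteq> q" using k(3) kr by blast
    ultimately have "S r = 0 \<and> T r = 0" using orders_eq_0_in_period[OF period] by simp
    with kr show ?thesis using orders_period_multiple[OF period, of i r] by simp
  qed
  moreover have "e = eps + mu" using e_eq_eps_plus_mu[OF period] mu eps by simp
  ultimately show ?thesis unfolding E using degrees_after_mu[OF mu assms(1)] by blast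
qed

end

lemma (in nonconstant_ratfun) iterate_laws_of_iterates:
  "iterate_laws d (\<lambda>k. degree (gk f k)) (\<lambda>k. degree (hk f k)) (Sk f) (Tk f)"
  by unfold_locales (simp_all add: max_degree_gk_hk iterate_0 Sk_or_Tk_eq_0 defects_add_of_less
      defects_add_of_greater orders_add_of_num_root orders_add_of_den_root)

theorem lemma7:
  fixes f :: "'a::field_gcd ratfun"
  assumes "rdeg f \<ge> 1"
  defines "d \<equiv> rdeg f"
  shows
   "(nu_idx f < mu_idx f \<longrightarrow>
      (let \<nu> = the_enat (nu_idx f) in
        (\<forall>i\<ge>1. degree (gk f (i * \<nu>)) = d ^ (i * \<nu>) \<and>
                int (degree (hk f (i * \<nu>))) = int (d ^ (i * \<nu>)) - int (delta f ^ i)) \<and>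
        (\<forall>k\<ge>1. \<not> \<nu> dvd k \<longrightarrow> degree (gk f k) = d ^ k \<and> degree (hk f k) = d ^ k)))
    \<and>
    (mu_idx f < nu_idx f \<and> eps_idx f = \<infinity> \<and> e_idx f = \<infinity> \<longrightarrow>
      (\<forall>k\<ge>1. enat k \<noteq> mu_idx f \<longrightarrow> degree (gk f k) = d ^ k \<and> degree (hk f k) = d ^ k))
    \<and>
    (mu_idx f < nu_idx f \<and> e_idx f < eps_idx f \<longrightarrow>
      (let \<mu> = the_enat (mu_idx f); e = the_enat (e_idx f); S = Sk f e in
        (\<forall>i. int (degree (gk f (i * e + \<mu>))) = int (d ^ (i * e + \<mu>)) - int (delta f * S ^ i) \<and>
             degree (hk f (i * e + \<mu>)) = d ^ (i * e + \<mu>)) \<and>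
        (\<forall>k\<ge>1. (\<nexists>i. k = i * e + \<mu>) \<longrightarrow> degree (gk f k) = d ^ k \<and> degree (hk f k) = d ^ k)))
    \<and>
    (mu_idx f < nu_idx f \<and> eps_idx f < \<infinity> \<longrightarrow>
      e_idx f = eps_idx f + mu_idx f \<and>
      (let \<mu> = the_enat (mu_idx f); \<epsilon> = the_enat (eps_idx f); e = the_enat (e_idx f);
           T = Tk f \<epsilon>; \<delta> = delta f in
        (\<forall>k\<ge>1. int (degree (gk f (\<mu> + k))) = int (d ^ (\<mu> + k)) - int (\<delta> * Sk f k) \<and>
                int (degree (hk f (\<mu> + k))) = int (d ^ (\<mu> + k)) - int (\<delta> * Tk f k)) \<and>
        (\<forall>i\<ge>1. Sk f (i * e) = \<delta> ^ i * T ^ i \<and> Tk f (i * e) = 0) \<and>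
        (\<forall>i. Tk f (i * e + \<epsilon>) = \<delta> ^ i * T ^ (i + 1) \<and> Sk f (i * e + \<epsilon>) = 0) \<and>
        (\<forall>k\<ge>1. (\<nexists>i. i \<ge> 1 \<and> k = i * e) \<longrightarrow> (\<nexists>i. k = i * e + \<epsilon>) \<longrightarrow>
                Sk f k = 0 \<and> Tk f k = 0)))"
proof -
  interpret nonconstant_ratfun f using assms(1) by unfold_locales
  interpret L: iterate_laws d "\<lambda>k. degree (gk f k)" "\<lambda>k. degree (hk f k)" "Sk f" "Tk f"
    unfolding d_def by (rule iterate_laws_of_iterates)
  have idx: "L.mu = mu_idx f" "L.nu = nu_idx f" "L.e = e_idx f" "L.eps = eps_idx f"
    by (simp_all add: L.mu_def L.nu_def L.e_def L.eps_def mu_idx_def nu_idx_def e_idx_def eps_idx_def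
        poly_gk_0_eq_0_iff poly_hk_0_eq_0_iff)
  then have "L.del = delta f" by (simp add: L.del_def delta_def)
  note idx = idx this
  show ?thesis
    unfolding idx[symmetric] Let_def
    using L.case_nu_less_mu L.case_mu_less_nu_no_roots L.case_mu_less_nu_e_less_eps
      L.case_mu_less_nu_eps_finite by blast
qed

end
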